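(* Let the standing assumptions (listed in the context) hold. Let $(x_k)$ have a cluster point $x^*$ such that $\mathcal{J}|_{\mathcal{N}}$ is strongly convex, where $\mathcal{N}\subset\Omega$ is a convex neighborhood of $x^*$. Then $\lim_{k\to\infty}x_k=x^*$.
   Context: Let $\mathcal{X}$ be a Hilbert space and $\mathcal{J}:\mathcal{X}\to\mathbb{R}$. Algorithm SLBFGS (structured inverse L-BFGS): inputs $x_0\in\mathcal{X}$, $\epsilon\geq0$, $\ell\in\mathbb{N}_0$, $c_0\geq 0$, $C_0\in[c_0,\infty]$, $c_s,c_1,c_2>0$; let $\tau_0>0$. For $k=0,1,2,\ldots$: let $m=\max\{0,k-\ell\}$; choose a symmetric positive semi-definite bounded linear operator $S_k$; set $B_k^{(0)}=\tau_k I+S_k$; let $B_k$ be obtained from $B_k^{(0)}$ and the currently stored pairs $(s_j,y_j)$, $m\le j\le k-1$, by successive L-BFGS updates $B\mapsto B+\frac{yy^T}{y^Ts}-\frac{Bss^TB}{s^TBs}$; set $d_k=-B_k^{-1}\nabla\mathcal{J}(x_k)$; compute a step length $\alpha_k>0$ by a line search; set $s_k=\alpha_kd_k$, $x_{k+1}=x_k+s_k$, $y_k=\nabla\mathcal{J}(x_{k+1})-\nabla\mathcal{J}(x_k)$; store $(s_k,y_k)$ only if $y_k^Ts_k>c_s\|s_k\|^2$; if $k\ge\ell$ remove $(s_m,y_m)$ from storage; stop with output $x_{k+1}$ if $\|\nabla\mathcal{J}(x_{k+1})\|\le\epsilon$; set $z_k=y_k-S_{k+1}s_k$, $\omega^l_{k+1}=\min\{c_0,c_1\|\nabla\mathcal{J}(x_{k+1})\|^{c_2}\}$,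 $\omega^u_{k+1}=\max\{C_0,(c_1\|\nabla\mathcal{J}(x_{k+1})\|^{c_2})^{-1}\}$; with $P(t)=\min\{\max\{t,\omega^l_{k+1}\},\omega^u_{k+1}\}$ and $\rho=z_k^Ts_k$ let $\tau^s=P(\rho/\|s_k\|^2)$, $\tau^g=P(\|z_k\|/\|s_k\|)$, $\tau^z=P(\|z_k\|^2/\rho)$; if $\rho>0$ choose $\tau_{k+1}\in[\tau^s,\tau^z]$, else choose $\tau_{k+1}\in[\tau^s,\tau^g]$. Line searches: Armijo with backtracking means, for fixed $\beta,\sigma\in(0,1)$, $\alpha_k$ is the largest number in $\{1,\beta,\beta^2,\ldots\}$ with $\mathcal{J}(x_{k+1})\le\mathcal{J}(x_k)+\alpha_k\sigma\nabla\mathcal{J}(x_k)^Td_k$; the Wolfe–Powell conditions are this Armijo inequality together with $\nabla\mathcal{J}(x_{k+1})^Td_k\ge\eta\nabla\mathcal{J}(x_k)^Td_k$ for fixed $\eta\in(\sigma,1)$. Let $\Omega=\{x:\mathcal{J}(x)\le\mathcal{J}(x_0)\}$. Standing assumptions: 1) $\mathcal{J}$ is continuously differentiable and bounded below; 2) $\nabla\mathcal{J}$ is Lipschitz continuous on $\Omega$ with constant $L>0$; 3) $(\|S_k\|)$ is bounded; 4) the step sizes consistently satisfy the Armijo condition computed by backtracking, or consistently satisfy the Wolfe–Powell conditions (no uniform continuity assumption on a neighborhood of $\Omega$ is required); 5) $c_0=0$ is only chosen if then $\sup_k\|(B_k^{(0)})^{-1}\|<\infty$; 6) $C_0=\infty$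 is only chosen if either the interval $[\tau^s,\tau^z]$ is replaced by $[\tau^s,\tau^g]$, or $\mathcal{J}$ is twice continuously differentiable, $\int_0^1\nabla^2\mathcal{J}(x_k+ts_k)\,dt-S_{k+1}$ is symmetric positive semi-definite for all $k$ with bounded norms; 7) the algorithm is run with $\epsilon=0$ and generates an infinite sequence $(x_k)$; 8) $(\|B_k\|)$ and $(\|B_k^{-1}\|)$ are bounded. *)

theory Defs
  imports "HOL-Analysis.Analysis"
begin

definition strongly_convex_on :: "'a::real_inner set \<Rightarrow> ('a \<Rightarrow> real) \<Rightarrow> bool" where
  "strongly_convex_on N f \<longleftrightarrow> (\<exists>\<mu>>0. \<forall>x\<in>N. \<forall>y\<in>N. \<forall>t\<in>{0..1}.
     f ((1 - t) *\<^sub>R x + t *\<^sub>R y) \<le> (1 - t) * f x + t * f y - \<mu> / 2 * t * (1 - t) * (norm (x - y))\<^sup>2)"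

definition sym_psd_op :: "('a::real_inner \<Rightarrow> 'a) \<Rightarrow> bool" where
  "sym_psd_op A \<longleftrightarrow> bounded_linear A \<and> (\<forall>u v. A u \<bullet> v = u \<bullet> A v) \<and> (\<forall>v. 0 \<le> v \<bullet> A v)"

definition lbfgs_upd :: "('a::real_inner \<Rightarrow> 'a) \<Rightarrow> 'a \<Rightarrow> 'a \<Rightarrow> ('a \<Rightarrow> 'a)" where
  "lbfgs_upd B s y = (\<lambda>v. B v + ((y \<bullet> v) / (y \<bullet> s)) *\<^sub>R y - ((s \<bullet> B v) / (s \<bullet> B s)) *\<^sub>R B s)"

definition step_s :: "(nat \<Rightarrow> 'a::real_inner) \<Rightarrow> nat \<Rightarrow> 'a" where
  "step_s x k = x (Suc k) - x k"

definition step_y :: "('a::real_inner \<Rightarrow> 'a) \<Rightarrow> (nat \<Rightarrow> 'a) \<Rightarrow> nat \<Rightarrow> 'a" where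
  "step_y G x k = G (x (Suc k)) - G (x k)"

text \<open>Pairs stored at iteration k: indices j with max 0 (k - l) <= j <= k - 1 that passed the
  curvature test  y_j^T s_j > c_s |s_j|^2, in increasing order of j.\<close>
definition stored_pairs :: "('a::real_inner \<Rightarrow> 'a) \<Rightarrow> (nat \<Rightarrow> 'a) \<Rightarrow> nat \<Rightarrow> real \<Rightarrow> nat \<Rightarrow> ('a \<times> 'a) list" where
  "stored_pairs G x l cs k =
     map (\<lambda>j. (step_s x j, step_y G x j))
       (filter (\<lambda>j. step_y G x j \<bullet> step_s x j > cs * (norm (step_s x j))\<^sup>2) [k - l..<k])"

definition B_init :: "(nat \<Rightarrow> real) \<Rightarrow> (nat \<Rightarrow> 'a::real_inner \<Rightarrow> 'a) \<Rightarrow> nat \<Rightarrow> ('a \<Rightarrow> 'a)" where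
  "B_init \<tau> S k = (\<lambda>v. \<tau> k *\<^sub>R v + S k v)"

definition B_lbfgs :: "(nat \<Rightarrow> real) \<Rightarrow> (nat \<Rightarrow> 'a::real_inner \<Rightarrow> 'a) \<Rightarrow> ('a \<Rightarrow> 'a) \<Rightarrow> (nat \<Rightarrow> 'a)
    \<Rightarrow> nat \<Rightarrow> real \<Rightarrow> nat \<Rightarrow> ('a \<Rightarrow> 'a)" where
  "B_lbfgs \<tau> S G x l cs k =
     foldl (\<lambda>B (s, y). lbfgs_upd B s y) (B_init \<tau> S k) (stored_pairs G x l cs k)"

definition clip :: "real \<Rightarrow> ereal \<Rightarrow> real \<Rightarrow> real" where
  "clip wl wu t = real_of_ereal (min (ereal (max t wl)) wu)"

definition tau_rule :: "bool \<Rightarrow> real \<Rightarrow> ereal \<Rightarrow> real \<Rightarrow> real \<Rightarrow> ('a::real_inner \<Rightarrow> 'a)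
    \<Rightarrow> 'a \<Rightarrow> 'a \<Rightarrow> 'a \<Rightarrow> real \<Rightarrow> bool" where
  "tau_rule use_g c0 C0 c1 c2 S1 s y g1 t \<longleftrightarrow>
     (let z = y - S1 s; \<rho> = z \<bullet> s;
          wl = min c0 (c1 * norm g1 powr c2);
          wu = max C0 (ereal (inverse (c1 * norm g1 powr c2)));
          ts = clip wl wu (\<rho> / (norm s)\<^sup>2);
          tg = clip wl wu (norm z / norm s);
          tz = clip wl wu ((norm z)\<^sup>2 / \<rho>)
      in if \<rho> > 0 \<and> \<not> use_g then ts \<le> t \<and> t \<le> tz else ts \<le> t \<and> t \<le> tg)"

end

theory Submission
  imports Defs
begin

(* The operators B_k are symmetric positive semidefinite, since every L-BFGS update with
   y^T s > 0 preserves this; together with the uniform bounds on B_k and B_k^-1 the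
   directions are gradient related: |g_k|^2 <= M g_k^T B_k^-1 g_k and |d_k| <= M |g_k|.
   Either line search gives sufficient decrease, and a step shorter than beta comes with a
   point near x_k at which the directional derivative has grown by a fixed fraction of the
   slope g_k^T B_k^-1 g_k. As J x_k decreases to J xs, alpha_k times the slope tends to 0;
   at a nonstationary cluster point xs this forces alpha_k -> 0 along the subsequence, and
   the curvature condition then contradicts continuity of the gradient. So grad J xs = 0,
   and strong convexity near xs gives mu/2 |x - xs|^2 <= J x - J xs <= |grad J x| |x - xs|.
   This bounds each step by a multiple of |x_k - xs|, so once an iterate is close to xs
   with J close to J xs, all later iterates stay close. *)

section \<open>Symmetric positive semidefinite operators\<close>

lemma closed_norm_le_symmetric:
  fixes T :: "'a::real_inner \<Rightarrow> 'a"
  assumes sym: "\<And>u v. T u \<bullet> v = u \<bullet> T v"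
  shows "closed {v. norm (T v) \<le> c}"
proof -
  have "{v. norm (T v) \<le> c} = (\<Inter>u\<in>{u. norm u \<le> 1}. {v. \<bar>T u \<bullet> v\<bar> \<le> c})"
  proof (intro set_eqI iffI)
    fix v assume v: "v \<in> {v. norm (T v) \<le> c}"
    have "\<bar>T u \<bullet> v\<bar> \<le> c" if "norm u \<le> 1" for u
    proof -
      have "\<bar>T u \<bullet> v\<bar> \<le> norm u * norm (T v)"
        unfolding sym by (rule Cauchy_Schwarz_ineq2)
      also have "\<dots> \<le> norm (T v)" using that by (simp add: mult_left_le_one_le)
      finally show ?thesis using v by simp
    qed
    then show "v \<in> (\<Inter>u\<in>{u. norm u \<le> 1}. {v. \<bar>T u \<bullet> v\<bar> \<le> c})" by blast
  next
    fix v assume "v \<in> (\<Inter>u\<in>{u. norm u \<le> 1}. {v. \<bar>T u \<bullet> v\<bar> \<le> c})"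
    moreover have "norm (sgn (T v)) \<le> 1" by (simp add: norm_sgn)
    ultimately have "\<bar>T (sgn (T v)) \<bullet> v\<bar> \<le> c" by blast
    moreover have "T (sgn (T v)) \<bullet> v = norm (T v)"
      by (cases "T v = 0") (simp_all add: sym sgn_div_norm dot_square_norm power2_eq_square)
    ultimately show "v \<in> {v. norm (T v) \<le> c}" by simp
  qed
  then show ?thesis
    by (simp only:) (intro closed_INT ballI closed_Collect_le continuous_intros)
qed

lemma bounded_linear_if_bounded_on_ball:
  fixes T :: "'a::real_normed_vector \<Rightarrow> 'b::real_normed_vector"
  assumes lin: "linear T" and r: "0 < r" and bnd: "\<And>w. w \<in> ball v0 r \<Longrightarrow> norm (T w) \<le> c"
  shows "bounded_linear T"
proof -
  have small: "norm (T w) \<le> 2 * c" if "norm w < r" for w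
  proof -
    have "T w = T (v0 + w) - T v0" by (simp add: linear_add[OF lin])
    moreover have "norm (T (v0 + w)) \<le> c" "norm (T v0) \<le> c"
      using bnd r that by (auto simp: dist_norm)
    ultimately show ?thesis by (metis norm_triangle_le_diff add_mono mult_2)
  qed
  have bound: "norm (T v) \<le> norm v * (4 * c / r)" for v
  proof (cases "v = 0")
    case True then show ?thesis by (simp add: linear_0[OF lin])
  next
    case False
    define t where "t = r / (2 * norm v)"
    have t: "0 < t" "norm (t *\<^sub>R v) < r" using False r by (simp_all add: t_def)
    then have "t * norm (T v) \<le> 2 * c" using small[of "t *\<^sub>R v"] by (simp add: linear_scale[OF lin])
    then show ?thesis using t(1) False r by (simp add: t_def field_simps)
  qed
  show ?thesis
    by (rule bounded_linear_intro[OF _ _ bound]) (simp_all add: linear_add[OF lin] linear_scale[OF lin])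
qed

text \<open>The hypotheses bound \<open>onorm (inv B\<^sub>k)\<close>, which only controls \<open>inv B\<^sub>k\<close> once it is known to be
  a bounded operator; that is what the Hellinger-Toeplitz theorem provides.\<close>

theorem Hellinger_Toeplitz:
  fixes T :: "'a::{real_inner,complete_space} \<Rightarrow> 'a"
  assumes lin: "linear T" and sym: "\<And>u v. T u \<bullet> v = u \<bullet> T v"
  shows "bounded_linear T"
proof -
  define E where "E n = {v. norm (T v) \<le> real n}" for n
  have closed: "closed (E n)" for n unfolding E_def by (rule closed_norm_le_symmetric[OF sym])
  have "v \<in> E (nat \<lceil>norm (T v)\<rceil>)" for v by (simp add: E_def)
  then have cover: "\<Union>(range E) = UNIV" by blast
  obtain n where "interior (E n) \<noteq> {}"
  proof (rule ccontr)
    assume "\<not> thesis"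
    then have "euclidean interior_of \<Union>(range E) = {}"
      using that by (intro Baire_category_alt) (auto simp: completely_metrizable_space_euclidean closed)
    then show False by (simp add: cover)
  qed
  then obtain v0 r where "0 < r" "ball v0 r \<subseteq> E n"
    by (meson ex_in_conv open_contains_ball open_interior interior_subset subset_trans)
  then show ?thesis using lin by (intro bounded_linear_if_bounded_on_ball) (auto simp: E_def)
qed

lemma sym_psd_op_Cauchy_Schwarz:
  assumes "sym_psd_op B"
  shows "(u \<bullet> B v)\<^sup>2 \<le> (u \<bullet> B u) * (v \<bullet> B v)"
proof -
  have lin: "linear B" and sym: "\<And>u v. B u \<bullet> v = u \<bullet> B v" and psd: "\<And>v. 0 \<le> v \<bullet> B v"
    using assms by (auto simp: sym_psd_op_def bounded_linear.linear)
  define p q r where "p = u \<bullet> B v" and "q = u \<bullet> B u" and "r = v \<bullet> B v"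
  have quadratic: "0 \<le> r - 2 * t * p + t\<^sup>2 * q" for t
  proof -
    have vu: "v \<bullet> B u = p" unfolding p_def by (metis sym inner_commute)
    have "0 \<le> (v - t *\<^sub>R u) \<bullet> B (v - t *\<^sub>R u)" by (rule psd)
    also have "B (v - t *\<^sub>R u) = B v - t *\<^sub>R B u" by (simp add: linear_diff[OF lin] linear_scale[OF lin])
    finally show ?thesis
      by (simp add: inner_diff_left inner_diff_right vu p_def[symmetric] q_def[symmetric]
          r_def[symmetric] power2_eq_square algebra_simps)
  qed
  show ?thesis
  proof (cases "q = 0")
    case True
    have "p = 0"
    proof (rule ccontr)
      assume "p \<noteq> 0"
      then show False using quadratic[of "(r + 1) / (2 * p)"] True by simp
    qed
    then show ?thesis using True by (simp add: p_def q_def)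
  next
    case False
    then have q: "0 < q" using psd q_def by (metis order_le_less)
    have "0 \<le> r - 2 * (p / q) * p + (p / q)\<^sup>2 * q" by (rule quadratic)
    also have "\<dots> = r - p\<^sup>2 / q" using q by (simp add: power2_eq_square field_simps)
    finally have "p\<^sup>2 \<le> q * r" using q by (simp add: pos_divide_le_eq mult.commute)
    then show ?thesis by (simp add: p_def q_def r_def)
  qed
qed

lemma sym_psd_op_inv:
  fixes B :: "'a::{real_inner,complete_space} \<Rightarrow> 'a"
  assumes B: "sym_psd_op B" and "bij B"
  shows "sym_psd_op (inv B)"
proof -
  have sym: "\<And>u v. B u \<bullet> v = u \<bullet> B v" and psd: "\<And>v. 0 \<le> v \<bullet> B v"
    using B by (auto simp: sym_psd_op_def)
  have BT: "B (inv B v) = v" for v using \<open>bij B\<close> by (simp add: bij_is_surj surj_f_inv_f)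
  have linB: "linear B" using B by (simp add: sym_psd_op_def bounded_linear.linear)
  have TB: "inv B (B v) = v" for v using \<open>bij B\<close> by (simp add: bij_is_inj)
  have lin: "linear (inv B)"
  proof (rule linearI)
    show "inv B (u + v) = inv B u + inv B v" for u v
      by (metis BT TB linear_add[OF linB])
    show "inv B (c *\<^sub>R u) = c *\<^sub>R inv B u" for c u
      by (metis BT TB linear_scale[OF linB])
  qed
  have sym_inv: "inv B u \<bullet> v = u \<bullet> inv B v" for u v
    by (metis BT sym)
  have "0 \<le> v \<bullet> inv B v" for v
    by (metis BT psd inner_commute)
  then show ?thesis
    using Hellinger_Toeplitz[OF lin sym_inv] sym_inv by (simp add: sym_psd_op_def)
qed

lemma norm_sq_le_inner_sym_psd_op:
  assumes B: "sym_psd_op B" and M: "0 \<le> M" and bnd: "\<And>v. norm (B v) \<le> M * norm v"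
  shows "(norm (B w))\<^sup>2 \<le> M * (w \<bullet> B w)"
proof -
  have sym: "\<And>u v. B u \<bullet> v = u \<bullet> B v" and psd: "\<And>v. 0 \<le> v \<bullet> B v"
    using B by (auto simp: sym_psd_op_def)
  have "((norm (B w))\<^sup>2)\<^sup>2 = (w \<bullet> B (B w))\<^sup>2" by (simp add: sym power2_norm_eq_inner)
  also have "\<dots> \<le> (w \<bullet> B w) * (B w \<bullet> B (B w))" by (rule sym_psd_op_Cauchy_Schwarz[OF B])
  also have "\<dots> \<le> (w \<bullet> B w) * (M * (norm (B w))\<^sup>2)"
  proof (rule mult_left_mono[OF _ psd])
    have "B w \<bullet> B (B w) \<le> norm (B w) * norm (B (B w))" by (rule norm_cauchy_schwarz)
    also have "\<dots> \<le> norm (B w) * (M * norm (B w))" by (simp add: bnd mult_left_mono)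
    finally show "B w \<bullet> B (B w) \<le> M * (norm (B w))\<^sup>2" by (simp add: power2_eq_square algebra_simps)
  qed
  finally have *: "(norm (B w))\<^sup>2 * (norm (B w))\<^sup>2 \<le> (M * (w \<bullet> B w)) * (norm (B w))\<^sup>2"
    by (simp add: power2_eq_square algebra_simps)
  show ?thesis
  proof (cases "B w = 0")
    case True then show ?thesis using psd[of w] M by simp
  next
    case False then show ?thesis by (intro mult_right_le_imp_le[OF *]) simp
  qed
qed

lemma norm_apply_le_onorm_bound:
  assumes "bounded_linear f" "onorm f \<le> M"
  shows "norm (f v) \<le> M * norm v"
  using onorm[OF assms(1)] mult_right_mono[OF assms(2) norm_ge_zero] by (rule order_trans)

lemma uniform_bound_from_onorm:
  fixes A A' :: "nat \<Rightarrow> 'a::real_normed_vector \<Rightarrow> 'b::real_normed_vector"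
  assumes "\<And>k. bounded_linear (A k)" "\<And>k. bounded_linear (A' k)"
    and "\<exists>M. \<forall>k. onorm (A k) \<le> M \<and> onorm (A' k) \<le> M"
  obtains M where "0 < M" "\<And>k v. norm (A k v) \<le> M * norm v" "\<And>k v. norm (A' k v) \<le> M * norm v"
proof -
  obtain M0 where M0: "\<And>k. onorm (A k) \<le> M0 \<and> onorm (A' k) \<le> M0" using assms(3) by blast
  have "norm (A k v) \<le> max M0 1 * norm v" "norm (A' k v) \<le> max M0 1 * norm v" for k v
    using M0[of k] assms(1,2) by (auto simp: le_max_iff_disj intro!: norm_apply_le_onorm_bound)
  then show thesis by (intro that[of "max M0 1"]) auto
qed

lemma norm_sq_le_inner_inv_sym_psd_op:
  fixes B :: "'a::{real_inner,complete_space} \<Rightarrow> 'a"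
  assumes B: "sym_psd_op B" "bij B" and M: "0 \<le> M" and bound: "\<And>v. norm (B v) \<le> M * norm v"
  shows "(norm g)\<^sup>2 \<le> M * (g \<bullet> inv B g)"
proof -
  have "B (inv B g) = g" using B(2) by (simp add: bij_is_surj surj_f_inv_f)
  then show ?thesis
    using norm_sq_le_inner_sym_psd_op[OF B(1) M bound, of "inv B g"] by (simp add: inner_commute)
qed

section \<open>The L-BFGS operators\<close>

text \<open>When \<open>s \<bullet> B s = 0\<close> the last term of the update vanishes (division by zero is zero);
  this is harmless, since then \<open>s \<bullet> B v = 0\<close> for all \<open>v\<close> by the Cauchy-Schwarz inequality.\<close>

lemma sym_psd_op_lbfgs_upd:
  assumes B: "sym_psd_op B" and ys: "0 < y \<bullet> s"
  shows "sym_psd_op (lbfgs_upd B s y)"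
proof -
  have bl: "bounded_linear B" and sym: "\<And>u v. B u \<bullet> v = u \<bullet> B v" and psd: "\<And>v. 0 \<le> v \<bullet> B v"
    using B by (auto simp: sym_psd_op_def)
  have "bounded_linear (lbfgs_upd B s y)"
    unfolding lbfgs_upd_def
    by (intro bounded_linear_add bounded_linear_sub bl bounded_linear_scaleR_left
        bounded_linear_compose[OF bounded_linear_scaleR_left] bounded_linear_divide
        bounded_linear_compose[OF bounded_linear_divide] bounded_linear_inner_right
        bounded_linear_compose[OF bounded_linear_inner_right bl])
  moreover have "lbfgs_upd B s y u \<bullet> v = u \<bullet> lbfgs_upd B s y v" for u v
  proof -
    have "s \<bullet> B u = u \<bullet> B s" "s \<bullet> B v = v \<bullet> B s" by (metis sym inner_commute)+
    then show ?thesis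
      unfolding lbfgs_upd_def inner_add_left inner_add_right inner_diff_left inner_diff_right
        inner_scaleR_left inner_scaleR_right sym[of u v] sym[of s v]
      by (simp add: inner_commute mult.commute)
  qed
  moreover have "0 \<le> v \<bullet> lbfgs_upd B s y v" for v
  proof -
    have "(s \<bullet> B v) * (s \<bullet> B v) / (s \<bullet> B s) \<le> v \<bullet> B v"
      using sym_psd_op_Cauchy_Schwarz[OF B, of s v] psd[of s] psd[of v]
      by (cases "s \<bullet> B s = 0") (simp_all add: divide_le_eq power2_eq_square mult.commute)
    moreover have "0 \<le> (y \<bullet> v) * (y \<bullet> v) / (y \<bullet> s)" using ys by simp
    ultimately show ?thesis
      using sym[of s v] by (simp add: lbfgs_upd_def inner_add_right inner_diff_right inner_commute)
  qed
  ultimately show ?thesis by (simp add: sym_psd_op_def)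
qed

lemma sym_psd_op_foldl_lbfgs_upd:
  assumes "sym_psd_op B" "\<forall>(s, y)\<in>set ps. 0 < y \<bullet> s"
  shows "sym_psd_op (foldl (\<lambda>B (s, y). lbfgs_upd B s y) B ps)"
  using assms by (induction ps arbitrary: B) (auto intro: sym_psd_op_lbfgs_upd)

lemma sym_psd_op_B_init:
  assumes "sym_psd_op (S k)" "0 \<le> \<tau> k"
  shows "sym_psd_op (B_init \<tau> S k)"
  using assms unfolding sym_psd_op_def B_init_def
  by (auto intro!: bounded_linear_add bounded_linear_scaleR_right bounded_linear_ident
      simp: inner_add_left inner_add_right inner_commute)

lemma sym_psd_op_B_lbfgs:
  assumes "sym_psd_op (S k)" "0 \<le> \<tau> k" "0 \<le> cs"
  shows "sym_psd_op (B_lbfgs \<tau> S G x l cs k)"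
proof -
  have "0 < y \<bullet> s" if "(s, y) \<in> set (stored_pairs G x l cs k)" for s y
  proof -
    have "cs * (norm s)\<^sup>2 < y \<bullet> s" using that by (auto simp: stored_pairs_def)
    moreover have "0 \<le> cs * (norm s)\<^sup>2" using \<open>0 \<le> cs\<close> by simp
    ultimately show ?thesis by linarith
  qed
  then have "\<forall>(s, y)\<in>set (stored_pairs G x l cs k). 0 < y \<bullet> s" by blast
  then show ?thesis
    unfolding B_lbfgs_def by (intro sym_psd_op_foldl_lbfgs_upd sym_psd_op_B_init assms)
qed

lemma clip_nonneg:
  assumes "0 \<le> wl" "ereal wl \<le> wu"
  shows "0 \<le> clip wl wu t"
proof (cases "ereal (max t wl) \<le> wu")
  case True
  then show ?thesis using assms by (cases "t \<le> wl") (auto simp: clip_def min_def max_def)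
next
  case False
  then have "min (ereal (max t wl)) wu = wu" by (metis min.absorb2 nle_le)
  moreover have "0 \<le> wu" using assms by (metis ereal_less_eq(5) order_trans)
  ultimately show ?thesis by (simp add: clip_def real_of_ereal_pos)
qed

lemma tau_rule_nonneg:
  assumes "tau_rule use_g c0 C0 c1 c2 S1 s y g1 t" "0 \<le> c0" "ereal c0 \<le> C0" "0 \<le> c1"
  shows "0 \<le> t"
proof -
  define wl where "wl = min c0 (c1 * norm g1 powr c2)"
  define wu where "wu = max C0 (ereal (inverse (c1 * norm g1 powr c2)))"
  have "ereal wl \<le> C0" using assms(3) by (simp add: wl_def) (metis min.cobounded1 ereal_less_eq(3) order_trans)
  then have "0 \<le> clip wl wu ((y - S1 s) \<bullet> s / (norm s)\<^sup>2)"
    using assms(2,4) by (intro clip_nonneg) (auto simp: wl_def wu_def intro: order_trans)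
  moreover have "clip wl wu ((y - S1 s) \<bullet> s / (norm s)\<^sup>2) \<le> t"
    using assms(1) unfolding tau_rule_def Let_def wl_def[symmetric] wu_def[symmetric]
    by (auto split: if_splits)
  ultimately show ?thesis by linarith
qed

section \<open>Line searches and strong convexity\<close>

lemma has_real_derivative_along_line:
  fixes J :: "'a::real_inner \<Rightarrow> real"
  assumes grad: "\<And>v. (J has_derivative (\<lambda>h. G v \<bullet> h)) (at v)"
  shows "((\<lambda>t. J (a + t *\<^sub>R d)) has_real_derivative (G (a + z *\<^sub>R d) \<bullet> d)) (at z)"
proof -
  have "((\<lambda>t. a + t *\<^sub>R d) has_derivative (\<lambda>t. t *\<^sub>R d)) (at z)"
    by (auto intro!: derivative_eq_intros)
  from has_derivative_compose[OF this grad]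
  show ?thesis by (simp add: has_field_derivative_def o_def mult_commute_abs)
qed

lemma strongly_convex_on_first_order:
  fixes J :: "'a::real_inner \<Rightarrow> real"
  assumes grad: "\<And>v. (J has_derivative (\<lambda>h. G v \<bullet> h)) (at v)" and "strongly_convex_on N J"
  obtains \<mu> where "0 < \<mu>"
    "\<And>a b. a \<in> N \<Longrightarrow> b \<in> N \<Longrightarrow> J a + G a \<bullet> (b - a) + \<mu> / 2 * (norm (b - a))\<^sup>2 \<le> J b"
proof -
  obtain \<mu> where "0 < \<mu>" and \<mu>: "\<forall>a\<in>N. \<forall>b\<in>N. \<forall>t\<in>{0..1}.
      J ((1 - t) *\<^sub>R a + t *\<^sub>R b) \<le> (1 - t) * J a + t * J b - \<mu> / 2 * t * (1 - t) * (norm (a - b))\<^sup>2"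
    using \<open>strongly_convex_on N J\<close> unfolding strongly_convex_on_def by blast
  have "J a + G a \<bullet> (b - a) + \<mu> / 2 * (norm (b - a))\<^sup>2 \<le> J b" if ab: "a \<in> N" "b \<in> N" for a b
  proof -
    define \<phi> where "\<phi> t = J (a + t *\<^sub>R (b - a))" for t
    define q where "q h = J b - J a - \<mu> / 2 * (1 - h) * (norm (a - b))\<^sup>2" for h
    have "(\<phi> has_real_derivative (G a \<bullet> (b - a))) (at 0)"
      unfolding \<phi>_def using has_real_derivative_along_line[OF grad, of a "b - a" 0] by simp
    then have slope: "((\<lambda>h. (\<phi> (0 + h) - \<phi> 0) / h) \<longlongrightarrow> G a \<bullet> (b - a)) (at_right 0)"
      unfolding DERIV_def by (rule tendsto_mono[OF at_le, rotated]) simp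
    have "(q \<longlongrightarrow> q 0) (at_right 0)" unfolding q_def by (intro tendsto_intros)
    moreover have "eventually (\<lambda>h. (\<phi> (0 + h) - \<phi> 0) / h \<le> q h) (at_right 0)"
    proof -
      have "eventually (\<lambda>h::real. 0 < h \<and> h < 1) (at_right 0)"
        by (simp add: eventually_at_right_field) (metis zero_less_one)
      then show ?thesis
      proof (rule eventually_mono)
        fix h :: real assume h: "0 < h \<and> h < 1"
        have "(1 - h) *\<^sub>R a + h *\<^sub>R b = a + h *\<^sub>R (b - a)" by (simp add: algebra_simps)
        then have "\<phi> h - \<phi> 0 \<le> h * q h"
          using \<mu> ab h by (force simp: \<phi>_def q_def algebra_simps)
        then show "(\<phi> (0 + h) - \<phi> 0) / h \<le> q h" using h by (simp add: divide_le_eq mult.commute)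
      qed
    qed
    ultimately have "G a \<bullet> (b - a) \<le> q 0"
      by (intro tendsto_le[OF trivial_limit_at_right_real _ slope])
    then show ?thesis by (simp add: q_def norm_minus_commute)
  qed
  with \<open>0 < \<mu>\<close> that show thesis by blast
qed

lemma first_order_gap_le:
  assumes "J a + G a \<bullet> (b - a) + \<mu> / 2 * (norm (b - a))\<^sup>2 \<le> J b" "0 \<le> \<mu>"
  shows "J a - J b \<le> norm (G a) * norm (a - b)"
proof -
  have "0 \<le> \<mu> / 2 * (norm (b - a))\<^sup>2" using \<open>0 \<le> \<mu>\<close> by simp
  moreover have "G a \<bullet> (a - b) \<le> norm (G a) * norm (a - b)" by (rule norm_cauchy_schwarz)
  moreover have "G a \<bullet> (b - a) = - (G a \<bullet> (a - b))" by (simp add: inner_diff_right)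
  ultimately show ?thesis using assms(1) by linarith
qed

text \<open>The rejected trial step \<open>\<alpha> / \<beta>\<close> violates the Armijo inequality, so by the mean value theorem
  the directional derivative exceeds \<open>\<sigma> * (G x \<bullet> d)\<close> somewhere on that segment.\<close>

lemma armijo_backtracking_curvature:
  fixes J :: "'a::real_inner \<Rightarrow> real"
  assumes grad: "\<And>v. (J has_derivative (\<lambda>h. G v \<bullet> h)) (at v)"
    and \<beta>: "0 < \<beta>" "\<beta> < 1" and \<alpha>: "\<alpha> = \<beta> ^ i" "\<alpha> < \<beta>"
    and largest: "\<And>i. J (x + \<beta> ^ i *\<^sub>R d) \<le> J x + \<beta> ^ i * \<sigma> * (G x \<bullet> d) \<Longrightarrow> \<beta> ^ i \<le> \<alpha>"
  shows "\<exists>\<xi>. norm (\<xi> - x) \<le> \<alpha> / \<beta> * norm d \<and> (1 - \<sigma>) * - (G x \<bullet> d) \<le> (G \<xi> - G x) \<bullet> d"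
proof -
  obtain i' where i': "i = Suc i'" using \<alpha> \<beta> by (cases i) auto
  define t where "t = \<beta> ^ i'"
  have t: "0 < t" "t = \<alpha> / \<beta>" using \<beta> \<alpha>(1) i' by (simp_all add: t_def)
  have "\<not> J (x + t *\<^sub>R d) \<le> J x + t * \<sigma> * (G x \<bullet> d)"
  proof
    assume "J (x + t *\<^sub>R d) \<le> J x + t * \<sigma> * (G x \<bullet> d)"
    then have "t \<le> \<alpha>" using largest[of i'] by (simp add: t_def)
    moreover have "\<alpha> < t"
      using t(2) \<beta> \<alpha>(1) by (simp add: less_divide_eq mult_less_cancel_left1)
    ultimately show False by simp
  qed
  moreover obtain z where z: "0 < z" "z < t"
    "J (x + t *\<^sub>R d) - J (x + 0 *\<^sub>R d) = (t - 0) * (G (x + z *\<^sub>R d) \<bullet> d)"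
    using MVT2[of 0 t "\<lambda>s. J (x + s *\<^sub>R d)" "\<lambda>s. G (x + s *\<^sub>R d) \<bullet> d"]
      has_real_derivative_along_line[OF grad] t(1) by blast
  ultimately have "t * (\<sigma> * (G x \<bullet> d)) < t * (G (x + z *\<^sub>R d) \<bullet> d)"
    by (simp add: algebra_simps)
  then have "(1 - \<sigma>) * - (G x \<bullet> d) \<le> (G (x + z *\<^sub>R d) - G x) \<bullet> d"
    using t(1) by (simp add: mult_less_cancel_left_pos inner_diff_left algebra_simps)
  moreover have "norm ((x + z *\<^sub>R d) - x) \<le> \<alpha> / \<beta> * norm d"
    using z t(2) mult_right_mono[of z t "norm d"] by simp
  ultimately show ?thesis by blast
qed

lemma line_search_step:
  fixes J :: "'a::real_inner \<Rightarrow> real"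
  assumes grad: "\<And>v. (J has_derivative (\<lambda>h. G v \<bullet> h)) (at v)"
    and ls_params: "0 < \<beta>" "\<beta> < 1"
    and ls: "if armijo then
        (\<exists>i::nat. \<alpha> = \<beta> ^ i)
        \<and> J (x + \<alpha> *\<^sub>R d) \<le> J x + \<alpha> * \<sigma> * (G x \<bullet> d)
        \<and> (\<forall>i::nat. J (x + \<beta> ^ i *\<^sub>R d) \<le> J x + \<beta> ^ i * \<sigma> * (G x \<bullet> d) \<longrightarrow> \<beta> ^ i \<le> \<alpha>)
      else
        0 < \<alpha>
        \<and> J (x + \<alpha> *\<^sub>R d) \<le> J x + \<alpha> * \<sigma> * (G x \<bullet> d)
        \<and> G (x + \<alpha> *\<^sub>R d) \<bullet> d \<ge> \<eta> * (G x \<bullet> d)"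
  shows "0 < \<alpha>" "J (x + \<alpha> *\<^sub>R d) \<le> J x + \<alpha> * \<sigma> * (G x \<bullet> d)"
    "\<alpha> < \<beta> \<Longrightarrow> \<exists>\<xi>. norm (\<xi> - x) \<le> \<alpha> / \<beta> * norm d
        \<and> (if armijo then 1 - \<sigma> else 1 - \<eta>) * - (G x \<bullet> d) \<le> (G \<xi> - G x) \<bullet> d"
proof -
  show "0 < \<alpha>" using ls ls_params by (cases armijo) auto
  show "J (x + \<alpha> *\<^sub>R d) \<le> J x + \<alpha> * \<sigma> * (G x \<bullet> d)" using ls by (cases armijo) auto
  assume "\<alpha> < \<beta>"
  show "\<exists>\<xi>. norm (\<xi> - x) \<le> \<alpha> / \<beta> * norm d
      \<and> (if armijo then 1 - \<sigma> else 1 - \<eta>) * - (G x \<bullet> d) \<le> (G \<xi> - G x) \<bullet> d"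
  proof (cases armijo)
    case True
    then obtain i where "\<alpha> = \<beta> ^ i" using ls by auto
    from armijo_backtracking_curvature[OF grad ls_params this \<open>\<alpha> < \<beta>\<close>]
    show ?thesis using ls True by auto
  next
    case False
    have "\<alpha> * norm d * \<beta> \<le> \<alpha> * norm d" using \<open>0 < \<alpha>\<close> ls_params by (intro mult_left_le) auto
    then have "norm ((x + \<alpha> *\<^sub>R d) - x) \<le> \<alpha> / \<beta> * norm d"
      using \<open>0 < \<alpha>\<close> ls_params by (simp add: pos_le_divide_eq)
    moreover have "(1 - \<eta>) * - (G x \<bullet> d) \<le> (G (x + \<alpha> *\<^sub>R d) - G x) \<bullet> d"
      using ls False by (simp add: inner_diff_left algebra_simps)
    ultimately show ?thesis using False by (intro exI[of _ "x + \<alpha> *\<^sub>R d"]) simp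
  qed
qed

section \<open>Descent with gradient related directions\<close>

text \<open>The last assumption is what both line searches deliver for a step shorter than \<open>\<beta>\<close>:
  the new iterate itself under the Wolfe-Powell conditions, and under Armijo backtracking a point
  on the rejected step \<open>\<alpha> / \<beta>\<close>. For the L-BFGS directions, \<open>slope k\<close> below is
  \<open>G (x k) \<bullet> inv (B k) (G (x k))\<close>.\<close>

locale gradient_related_descent =
  fixes J :: "'a::real_inner \<Rightarrow> real" and G :: "'a \<Rightarrow> 'a"
    and x d :: "nat \<Rightarrow> 'a" and \<alpha> :: "nat \<Rightarrow> real" and \<sigma> \<beta> c M :: real
  assumes grad: "\<And>v. (J has_derivative (\<lambda>h. G v \<bullet> h)) (at v)"
    and G_cont: "continuous_on UNIV G"
    and iter: "\<And>k. x (Suc k) = x k + \<alpha> k *\<^sub>R d k"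
    and step_pos: "\<And>k. 0 < \<alpha> k"
    and params: "0 < \<sigma>" "0 < \<beta>" "0 < c" "0 < M"
    and gradient_related: "\<And>k. (norm (G (x k)))\<^sup>2 \<le> M * - (G (x k) \<bullet> d k)"
      "\<And>k. norm (d k) \<le> M * norm (G (x k))"
    and sufficient_decrease: "\<And>k. J (x (Suc k)) \<le> J (x k) + \<alpha> k * \<sigma> * (G (x k) \<bullet> d k)"
    and short_step_curvature: "\<And>k. \<alpha> k < \<beta> \<Longrightarrow>
      \<exists>\<xi>. norm (\<xi> - x k) \<le> \<alpha> k / \<beta> * norm (d k) \<and> c * - (G (x k) \<bullet> d k) \<le> (G \<xi> - G (x k)) \<bullet> d k"
begin

definition slope :: "nat \<Rightarrow> real" where
  "slope k = - (G (x k) \<bullet> d k)"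

lemma norm_grad_sq_le_slope: "(norm (G (x k)))\<^sup>2 \<le> M * slope k"
  using gradient_related(1) by (simp add: slope_def)

lemma slope_nonneg: "0 \<le> slope k"
  using norm_grad_sq_le_slope[of k] params(4) by (metis zero_le_power2 order_trans zero_le_mult_iff not_less)

lemma sufficient_decrease_slope: "\<sigma> * (\<alpha> k * slope k) \<le> J (x k) - J (x (Suc k))"
  using sufficient_decrease[of k] by (simp add: slope_def algebra_simps)

lemma short_step_curvature_slope:
  "\<alpha> k < \<beta> \<Longrightarrow> \<exists>\<xi>. norm (\<xi> - x k) \<le> \<alpha> k / \<beta> * norm (d k) \<and> c * slope k \<le> (G \<xi> - G (x k)) \<bullet> d k"
  using short_step_curvature by (simp add: slope_def)

lemma step_slope_nonneg: "0 \<le> \<alpha> k * slope k"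
  using step_pos[of k] slope_nonneg[of k] by simp

lemma G_isCont: "isCont G v"
  using G_cont by (simp add: continuous_on_eq_continuous_at)

lemma decseq_J: "decseq (\<lambda>k. J (x k))"
proof (rule decseq_SucI)
  fix k
  have "0 \<le> \<sigma> * (\<alpha> k * slope k)"
    using params(1) step_slope_nonneg[of k] by simp
  then show "J (x (Suc k)) \<le> J (x k)" using sufficient_decrease_slope[of k] by simp
qed

context
  fixes xs :: 'a and r :: "nat \<Rightarrow> nat"
  assumes subseq: "strict_mono r" and cluster: "(x \<circ> r) \<longlonglongrightarrow> xs"
begin

lemma J_subseq_tendsto: "(\<lambda>j. J (x (r j))) \<longlonglongrightarrow> J xs"
  using cluster has_derivative_continuous[OF grad]
  by (auto simp: o_def intro: isCont_tendsto_compose)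

lemma J_ge_cluster: "J xs \<le> J (x k)"
proof (rule LIMSEQ_le_const2[OF J_subseq_tendsto], intro exI allI impI)
  fix j assume "k \<le> j"
  then show "J (x (r j)) \<le> J (x k)"
    using decseq_J seq_suble[OF subseq, of j] by (simp add: decseq_def)
qed

lemma J_tendsto: "(\<lambda>k. J (x k)) \<longlonglongrightarrow> J xs"
proof -
  obtain L where L: "(\<lambda>k. J (x k)) \<longlonglongrightarrow> L"
    using decseq_convergent[OF decseq_J, of "J xs"] J_ge_cluster by blast
  then have "(\<lambda>j. J (x (r j))) \<longlonglongrightarrow> L"
    using LIMSEQ_subseq_LIMSEQ[OF L subseq] by (simp add: o_def)
  then show ?thesis using L J_subseq_tendsto LIMSEQ_unique by metis
qed

lemma step_slope_tendsto_zero: "(\<lambda>k. \<alpha> k * slope k) \<longlonglongrightarrow> 0"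
proof (rule tendsto_sandwich)
  show "eventually (\<lambda>k. 0 \<le> \<alpha> k * slope k) sequentially"
    by (intro always_eventually allI step_slope_nonneg)
  show "eventually (\<lambda>k. \<alpha> k * slope k \<le> (J (x k) - J (x (Suc k))) / \<sigma>) sequentially"
    using sufficient_decrease_slope by (simp add: pos_le_divide_eq[OF params(1)] mult.commute)
  have "(\<lambda>k. J (x (Suc k))) \<longlonglongrightarrow> J xs" using J_tendsto by (rule LIMSEQ_Suc)
  then show "(\<lambda>k. (J (x k) - J (x (Suc k))) / \<sigma>) \<longlonglongrightarrow> 0"
    using J_tendsto params(1) by (auto intro!: tendsto_eq_intros)
qed (simp)

lemma x_cluster: "(\<lambda>j. x (r j)) \<longlonglongrightarrow> xs"
  using cluster by (simp add: o_def)

lemma G_cluster: "(\<lambda>j. G (x (r j))) \<longlonglongrightarrow> G xs"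
  using isCont_tendsto_compose[OF G_isCont x_cluster] .

lemma slope_bounded_below_near_nonstationary:
  assumes "G xs \<noteq> 0"
  shows "eventually (\<lambda>j. (norm (G xs) / 2)\<^sup>2 / M \<le> slope (r j)) sequentially"
proof -
  have "eventually (\<lambda>j. norm (G xs) / 2 < norm (G (x (r j)))) sequentially"
    using tendsto_norm[OF G_cluster] assms by (intro order_tendstoD(1)) auto
  then show ?thesis
  proof (rule eventually_mono)
    fix j assume "norm (G xs) / 2 < norm (G (x (r j)))"
    then have "(norm (G xs) / 2)\<^sup>2 \<le> (norm (G (x (r j))))\<^sup>2" by (intro power_mono) auto
    also have "\<dots> \<le> M * slope (r j)" by (rule norm_grad_sq_le_slope)
    finally show "(norm (G xs) / 2)\<^sup>2 / M \<le> slope (r j)"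
      using params(4) by (simp only: pos_divide_le_eq mult.commute)
  qed
qed

lemma steps_tendsto_zero_near_nonstationary:
  assumes "G xs \<noteq> 0"
  shows "(\<lambda>j. \<alpha> (r j)) \<longlonglongrightarrow> 0"
proof (rule tendsto_sandwich)
  define \<delta> where "\<delta> = (norm (G xs) / 2)\<^sup>2 / M"
  have "0 < \<delta>" using assms params(4) by (simp add: \<delta>_def)
  show "eventually (\<lambda>j. 0 \<le> \<alpha> (r j)) sequentially" by (simp add: less_imp_le step_pos)
  show "eventually (\<lambda>j. \<alpha> (r j) \<le> \<alpha> (r j) * slope (r j) / \<delta>) sequentially"
    using slope_bounded_below_near_nonstationary[OF assms, folded \<delta>_def]
    by (rule eventually_mono) (use \<open>0 < \<delta>\<close> step_pos in \<open>simp add: pos_le_divide_eq mult_left_mono less_imp_le\<close>)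
  show "(\<lambda>j. \<alpha> (r j) * slope (r j) / \<delta>) \<longlonglongrightarrow> 0"
    using LIMSEQ_subseq_LIMSEQ[OF step_slope_tendsto_zero subseq]
    by (auto simp: o_def intro: tendsto_divide_zero)
qed simp

lemma curvature_tendsto_zero:
  assumes steps: "(\<lambda>j. \<alpha> (r j)) \<longlonglongrightarrow> 0"
    and near: "eventually (\<lambda>j. norm (\<xi> j - x (r j)) \<le> \<alpha> (r j) / \<beta> * norm (d (r j))) sequentially"
  shows "(\<lambda>j. (G (\<xi> j) - G (x (r j))) \<bullet> d (r j)) \<longlonglongrightarrow> 0"
proof -
  have "(\<lambda>j. \<xi> j - x (r j)) \<longlonglongrightarrow> 0"
  proof (rule Lim_null_comparison)
    show "eventually (\<lambda>j. norm (\<xi> j - x (r j)) \<le> \<alpha> (r j) / \<beta> * (M * norm (G (x (r j))))) sequentially"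
      using near
    proof (rule eventually_mono)
      fix j assume "norm (\<xi> j - x (r j)) \<le> \<alpha> (r j) / \<beta> * norm (d (r j))"
      also have "\<dots> \<le> \<alpha> (r j) / \<beta> * (M * norm (G (x (r j))))"
        using gradient_related(2) step_pos params(2) by (intro mult_left_mono) (auto intro: less_imp_le)
      finally show "norm (\<xi> j - x (r j)) \<le> \<alpha> (r j) / \<beta> * (M * norm (G (x (r j))))" .
    qed
    show "(\<lambda>j. \<alpha> (r j) / \<beta> * (M * norm (G (x (r j))))) \<longlonglongrightarrow> 0"
      using steps G_cluster params(2) by (auto intro!: tendsto_eq_intros)
  qed
  from tendsto_add[OF this x_cluster] have "\<xi> \<longlonglongrightarrow> xs" by simp
  from tendsto_diff[OF isCont_tendsto_compose[OF G_isCont this] G_cluster]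
  have G_diff: "(\<lambda>j. G (\<xi> j) - G (x (r j))) \<longlonglongrightarrow> 0" by simp
  show ?thesis
  proof (rule Lim_null_comparison)
    show "(\<lambda>j. norm (G (\<xi> j) - G (x (r j))) * (M * norm (G (x (r j))))) \<longlonglongrightarrow> 0"
      using tendsto_mult[OF tendsto_norm[OF G_diff] tendsto_mult[OF tendsto_const tendsto_norm[OF G_cluster]]]
      by simp
    have "norm ((G (\<xi> j) - G (x (r j))) \<bullet> d (r j)) \<le> norm (G (\<xi> j) - G (x (r j))) * norm (d (r j))" for j
      by (simp add: Cauchy_Schwarz_ineq2)
    also have "\<dots> j \<le> norm (G (\<xi> j) - G (x (r j))) * (M * norm (G (x (r j))))" for j
      using gradient_related(2) by (intro mult_left_mono) auto
    finally show "eventually (\<lambda>j. norm ((G (\<xi> j) - G (x (r j))) \<bullet> d (r j))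
        \<le> norm (G (\<xi> j) - G (x (r j))) * (M * norm (G (x (r j))))) sequentially"
      by (intro always_eventually allI)
  qed
qed

lemma cluster_point_stationary: "G xs = 0"
proof (rule ccontr)
  assume nonstationary: "G xs \<noteq> 0"
  define \<delta> where "\<delta> = (norm (G xs) / 2)\<^sup>2 / M"
  have "0 < c * \<delta>" using nonstationary params by (simp add: \<delta>_def)
  obtain \<xi> where \<xi>: "\<And>k. \<alpha> k < \<beta> \<Longrightarrow> norm (\<xi> k - x k) \<le> \<alpha> k / \<beta> * norm (d k)
      \<and> c * slope k \<le> (G (\<xi> k) - G (x k)) \<bullet> d k"
    using short_step_curvature_slope by metis
  have steps: "(\<lambda>j. \<alpha> (r j)) \<longlonglongrightarrow> 0" by (rule steps_tendsto_zero_near_nonstationary[OF nonstationary])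
  have short: "eventually (\<lambda>j. \<alpha> (r j) < \<beta>) sequentially"
    using steps params(2) by (rule order_tendstoD(2))
  then have "eventually (\<lambda>j. norm (\<xi> (r j) - x (r j)) \<le> \<alpha> (r j) / \<beta> * norm (d (r j))) sequentially"
    by (rule eventually_mono) (use \<xi> in blast)
  from order_tendstoD(2)[OF curvature_tendsto_zero[OF steps this] \<open>0 < c * \<delta>\<close>]
  have "eventually (\<lambda>j. (G (\<xi> (r j)) - G (x (r j))) \<bullet> d (r j) < c * \<delta>) sequentially" .
  moreover have "eventually (\<lambda>j. c * \<delta> \<le> (G (\<xi> (r j)) - G (x (r j))) \<bullet> d (r j)) sequentially"
    using slope_bounded_below_near_nonstationary[OF nonstationary, folded \<delta>_def] short
  proof eventually_elim
    case (elim j)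
    then have "c * \<delta> \<le> c * slope (r j)" using params(3) by simp
    also have "\<dots> \<le> (G (\<xi> (r j)) - G (x (r j))) \<bullet> d (r j)" using \<xi> elim(2) by blast
    finally show ?case .
  qed
  ultimately have "eventually (\<lambda>j. False) sequentially" by eventually_elim simp
  then show False by simp
qed

lemma norm_step_le:
  assumes "J (x k) - J xs \<le> norm (G (x k)) * norm (x k - xs)"
  shows "norm (x (Suc k) - x k) \<le> M\<^sup>2 / \<sigma> * norm (x k - xs)"
proof (cases "G (x k) = 0")
  case True
  then have "d k = 0" using gradient_related(2)[of k] by simp
  then show ?thesis using params by (simp add: iter)
next
  case False
  let ?g = "norm (G (x k))"
  have "(\<sigma> * \<alpha> k * ?g) * ?g = (\<sigma> * \<alpha> k) * (norm (G (x k)))\<^sup>2" by (simp add: power2_eq_square)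
  also have "\<dots> \<le> (\<sigma> * \<alpha> k) * (M * slope k)"
    using norm_grad_sq_le_slope[of k] step_pos[of k] params(1) by (intro mult_left_mono) auto
  also have "\<dots> = M * (\<sigma> * (\<alpha> k * slope k))" by simp
  also have "\<dots> \<le> M * (J (x k) - J xs)"
    using sufficient_decrease_slope[of k] J_ge_cluster[of "Suc k"] params(4) by (intro mult_left_mono) auto
  also have "\<dots> \<le> (M * norm (x k - xs)) * ?g"
    using assms params(4) by (simp add: mult_left_mono mult.assoc mult.commute)
  finally have "\<sigma> * \<alpha> k * ?g \<le> M * norm (x k - xs)"
    using False by (simp add: mult_le_cancel_right)
  then have "\<alpha> k * ?g \<le> M / \<sigma> * norm (x k - xs)"
    using params(1) by (simp add: field_simps)
  have "norm (x (Suc k) - x k) = \<alpha> k * norm (d k)" using step_pos[of k] by (simp add: iter)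
  also have "\<dots> \<le> M * (\<alpha> k * ?g)"
    using gradient_related(2)[of k] step_pos[of k] by (simp add: mult_left_mono mult.left_commute)
  also have "\<dots> \<le> M * (M / \<sigma> * norm (x k - xs))"
    using \<open>\<alpha> k * ?g \<le> M / \<sigma> * norm (x k - xs)\<close> params(4) by (intro mult_left_mono) auto
  finally show ?thesis by (simp add: power2_eq_square)
qed

lemma trapped_near_cluster:
  assumes "G xs = 0" and "0 < \<mu>"
    and first_order: "\<And>a b. a \<in> N \<Longrightarrow> b \<in> N \<Longrightarrow> J a + G a \<bullet> (b - a) + \<mu> / 2 * (norm (b - a))\<^sup>2 \<le> J b"
    and N: "cball xs ((1 + M\<^sup>2 / \<sigma>) * \<rho>) \<subseteq> N"
    and start: "norm (x K - xs) \<le> \<rho>" "J (x K) - J xs < \<mu> / 2 * \<rho>\<^sup>2"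
    and "K \<le> n"
  shows "norm (x n - xs) \<le> \<rho>"
  using \<open>K \<le> n\<close>
proof (induction rule: dec_induct)
  case base
  show ?case by (rule start(1))
next
  case (step n)
  define C where "C = M\<^sup>2 / \<sigma>"
  have C: "0 \<le> C" using params by (simp add: C_def)
  have inN: "z \<in> N" if "norm (z - xs) \<le> (1 + C) * \<rho>" for z
    using N that by (auto simp: C_def dist_norm norm_minus_commute)
  have "0 \<le> \<rho>" using step.IH norm_ge_zero order_trans by blast
  then have "\<rho> \<le> (1 + C) * \<rho>" using C by (simp add: algebra_simps)
  then have "x n \<in> N" using step.IH by (intro inN) simp
  have xsN: "xs \<in> N" using \<open>0 \<le> \<rho>\<close> \<open>\<rho> \<le> (1 + C) * \<rho>\<close> by (intro inN) simp
  have "J (x n) - J xs \<le> norm (G (x n)) * norm (x n - xs)"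
    using first_order[OF \<open>x n \<in> N\<close> xsN] \<open>0 < \<mu>\<close> by (intro first_order_gap_le) auto
  then have "norm (x (Suc n) - x n) \<le> C * norm (x n - xs)" unfolding C_def by (rule norm_step_le)
  also have "\<dots> \<le> C * \<rho>" using step.IH C by (rule mult_left_mono)
  finally have "norm (x (Suc n) - x n) \<le> C * \<rho>" .
  from norm_diff_triangle_le[OF this step.IH]
  have "norm (x (Suc n) - xs) \<le> (1 + C) * \<rho>" by (simp add: algebra_simps)
  then have "x (Suc n) \<in> N" by (rule inN)
  have "\<mu> / 2 * (norm (x (Suc n) - xs))\<^sup>2 \<le> J (x (Suc n)) - J xs"
    using first_order[OF xsN \<open>x (Suc n) \<in> N\<close>] \<open>G xs = 0\<close> by simp
  also have "\<dots> \<le> J (x K) - J xs"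
    using decseq_J step.hyps by (simp add: decseq_def)
  also have "\<dots> < \<mu> / 2 * \<rho>\<^sup>2" by (rule start(2))
  finally have "(norm (x (Suc n) - xs))\<^sup>2 < \<rho>\<^sup>2" using \<open>0 < \<mu>\<close> by simp
  then show ?case using \<open>0 \<le> \<rho>\<close> by (simp add: power2_less_imp_less less_imp_le)
qed

lemma tendsto_cluster_if_strongly_convex:
  assumes "xs \<in> interior N" and "strongly_convex_on N J"
  shows "x \<longlonglongrightarrow> xs"
proof (rule LIMSEQ_I)
  obtain \<mu> where \<mu>: "0 < \<mu>" and first_order:
      "\<And>a b. a \<in> N \<Longrightarrow> b \<in> N \<Longrightarrow> J a + G a \<bullet> (b - a) + \<mu> / 2 * (norm (b - a))\<^sup>2 \<le> J b"
    using strongly_convex_on_first_order[OF grad assms(2)] by blast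
  obtain \<delta> where \<delta>: "0 < \<delta>" "cball xs \<delta> \<subseteq> N" using assms(1) mem_interior_cball by blast
  fix e :: real assume "0 < e"
  define \<rho> where "\<rho> = min (e / 2) (\<delta> / (1 + M\<^sup>2 / \<sigma>))"
  have C: "0 < 1 + M\<^sup>2 / \<sigma>" using params by (simp add: add_pos_nonneg)
  have \<rho>: "0 < \<rho>" "\<rho> < e" using \<open>0 < e\<close> \<delta>(1) C by (auto simp: \<rho>_def)
  have "\<rho> \<le> \<delta> / (1 + M\<^sup>2 / \<sigma>)" by (simp add: \<rho>_def)
  then have "(1 + M\<^sup>2 / \<sigma>) * \<rho> \<le> \<delta>" using C by (simp add: pos_le_divide_eq mult.commute)
  have "eventually (\<lambda>j. dist (x (r j)) xs < \<rho> \<and> J (x (r j)) < J xs + \<mu> / 2 * \<rho>\<^sup>2) sequentially"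
    using cluster J_subseq_tendsto \<rho>(1) \<mu>
    by (intro eventually_conj tendstoD order_tendstoD(2)) (auto simp: o_def)
  then obtain j where "dist (x (r j)) xs < \<rho>" "J (x (r j)) < J xs + \<mu> / 2 * \<rho>\<^sup>2"
    using eventually_happens'[OF sequentially_bot] by blast
  then have K: "norm (x (r j) - xs) \<le> \<rho>" "J (x (r j)) - J xs < \<mu> / 2 * \<rho>\<^sup>2"
    by (auto simp: dist_norm)
  have "cball xs ((1 + M\<^sup>2 / \<sigma>) * \<rho>) \<subseteq> N"
    using \<delta>(2) \<open>(1 + M\<^sup>2 / \<sigma>) * \<rho> \<le> \<delta>\<close> by (metis subset_cball order_trans)
  then have "norm (x n - xs) \<le> \<rho>" if "r j \<le> n" for n
    using trapped_near_cluster[OF cluster_point_stationary \<mu> first_order _ K that] by blast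
  then show "\<exists>K. \<forall>n\<ge>K. norm (x n - xs) < e" using \<rho>(2) by force
qed

end

end

theorem lemma4p14:
  fixes J :: "'a::{real_inner, complete_space} \<Rightarrow> real"
    and G :: "'a \<Rightarrow> 'a"
    and x :: "nat \<Rightarrow> 'a"
    and \<alpha> \<tau> :: "nat \<Rightarrow> real"
    and S :: "nat \<Rightarrow> 'a \<Rightarrow> 'a"
    and l :: nat
    and c0 cs c1 c2 L \<beta> \<sigma> \<eta> :: real
    and C0 :: ereal
    and armijo use_g :: bool
    and xs :: 'a
    and N :: "'a set"
  defines "\<Omega> \<equiv> {v. J v \<le> J (x 0)}"
      and "B \<equiv> B_lbfgs \<tau> S G x l cs"
      and "d \<equiv> (\<lambda>k. - inv (B_lbfgs \<tau> S G x l cs k) (G (x k)))"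
  assumes params: "0 \<le> c0" "ereal c0 \<le> C0" "0 < cs" "0 < c1" "0 < c2" "0 < \<tau> 0"
    \<comment> \<open>(1) J continuously differentiable with gradient G, bounded below\<close>
    and grad: "\<And>v. (J has_derivative (\<lambda>h. G v \<bullet> h)) (at v)"
    and grad_cont: "continuous_on UNIV G"
    and bdd: "bdd_below (range J)"
    \<comment> \<open>(2) gradient Lipschitz on Omega\<close>
    and lip: "0 < L" "\<And>u v. u \<in> \<Omega> \<Longrightarrow> v \<in> \<Omega> \<Longrightarrow> norm (G u - G v) \<le> L * norm (u - v)"
    \<comment> \<open>structured part S_k: symmetric psd bounded operators, (3) with bounded norms\<close>
    and S_psd: "\<And>k. sym_psd_op (S k)"
    and S_bdd: "\<exists>M. \<forall>k. onorm (S k) \<le> M"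
    \<comment> \<open>iteration: B_k invertible, d_k = - B_k^{-1} grad J(x_k), x_{k+1} = x_k + alpha_k d_k\<close>
    and B_bij: "\<And>k. bij (B k)"
    and iter: "\<And>k. x (Suc k) = x k + \<alpha> k *\<^sub>R d k"
    \<comment> \<open>(4) line search, consistently Armijo-backtracking or Wolfe-Powell\<close>
    and ls_params: "0 < \<beta>" "\<beta> < 1" "0 < \<sigma>" "\<sigma> < 1" "\<sigma> < \<eta>" "\<eta> < 1"
    and ls: "\<And>k. if armijo then
        (\<exists>i::nat. \<alpha> k = \<beta> ^ i)
        \<and> J (x k + \<alpha> k *\<^sub>R d k) \<le> J (x k) + \<alpha> k * \<sigma> * (G (x k) \<bullet> d k)
        \<and> (\<forall>i::nat. J (x k + \<beta> ^ i *\<^sub>R d k) \<le> J (x k) + \<beta> ^ i * \<sigma> * (G (x k) \<bullet> d k)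
                    \<longrightarrow> \<beta> ^ i \<le> \<alpha> k)
      else
        0 < \<alpha> k
        \<and> J (x (Suc k)) \<le> J (x k) + \<alpha> k * \<sigma> * (G (x k) \<bullet> d k)
        \<and> G (x (Suc k)) \<bullet> d k \<ge> \<eta> * (G (x k) \<bullet> d k)"
    \<comment> \<open>update rule for tau_{k+1}\<close>
    and tau: "\<And>k. tau_rule use_g c0 C0 c1 c2 (S (Suc k)) (step_s x k) (step_y G x k)
                   (G (x (Suc k))) (\<tau> (Suc k))"
    \<comment> \<open>(5)\<close>
    and c0_zero: "c0 = 0 \<Longrightarrow> (\<forall>k. bij (B_init \<tau> S k)) \<and> (\<exists>M. \<forall>k. onorm (inv (B_init \<tau> S k)) \<le> M)"
    \<comment> \<open>(6)\<close>
    and C0_inf: "C0 = \<infinity> \<Longrightarrow> use_g \<or>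
       (\<exists>H :: 'a \<Rightarrow> ('a \<Rightarrow>\<^sub>L 'a).
          (\<forall>v. (G has_derivative blinfun_apply (H v)) (at v)) \<and> continuous_on UNIV H \<and>
          (\<forall>k. sym_psd_op (\<lambda>v. blinfun_apply (integral {0..1} (\<lambda>t. H (x k + t *\<^sub>R step_s x k))) v
                                  - S (Suc k) v)) \<and>
          (\<exists>M. \<forall>k. onorm (\<lambda>v. blinfun_apply (integral {0..1} (\<lambda>t. H (x k + t *\<^sub>R step_s x k))) v
                                  - S (Suc k) v) \<le> M))"
    \<comment> \<open>(7) epsilon = 0 and the algorithm never stops\<close>
    and nonstop: "\<And>k. G (x (Suc k)) \<noteq> 0"
    \<comment> \<open>(8) bounded B_k and B_k^{-1}\<close>
    and B_bdd: "\<exists>M. \<forall>k. onorm (B k) \<le> M \<and> onorm (inv (B k)) \<le> M"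
    \<comment> \<open>hypotheses of the lemma\<close>
    and cluster: "\<exists>r. strict_mono r \<and> (x \<circ> r) \<longlonglongrightarrow> xs"
    and N: "convex N" "N \<subseteq> \<Omega>" "xs \<in> interior N"
    and sconv: "strongly_convex_on N J"
  shows "x \<longlonglongrightarrow> xs"
proof -
  have \<tau>_nonneg: "0 \<le> \<tau> k" for k
    using params(6) tau_rule_nonneg[OF tau params(1,2)] params(4) by (cases k) auto
  have B_psd: "sym_psd_op (B k)" for k
    unfolding B_def using S_psd \<tau>_nonneg params(3) by (intro sym_psd_op_B_lbfgs) auto
  have bounded: "bounded_linear (B k)" "bounded_linear (inv (B k))" for k
    using B_psd sym_psd_op_inv[OF B_psd B_bij] by (auto simp: sym_psd_op_def)
  obtain M where M: "0 < M" "\<And>k v. norm (B k v) \<le> M * norm v" "\<And>k v. norm (inv (B k) v) \<le> M * norm v"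
    using uniform_bound_from_onorm[OF bounded B_bdd] by blast
  have d_B: "d k = - inv (B k) (G (x k))" for k by (simp add: d_def B_def)
  have "gradient_related_descent J G x d \<alpha> \<sigma> \<beta> (if armijo then 1 - \<sigma> else 1 - \<eta>) M"
  proof unfold_locales
    fix k
    note step = line_search_step[OF grad ls_params(1,2) ls[of k, unfolded iter]]
    show "0 < \<alpha> k" by (rule step(1))
    show "J (x (Suc k)) \<le> J (x k) + \<alpha> k * \<sigma> * (G (x k) \<bullet> d k)" using step(2) by (simp add: iter)
    show "\<alpha> k < \<beta> \<Longrightarrow> \<exists>\<xi>. norm (\<xi> - x k) \<le> \<alpha> k / \<beta> * norm (d k) \<and>
        (if armijo then 1 - \<sigma> else 1 - \<eta>) * - (G (x k) \<bullet> d k) \<le> (G \<xi> - G (x k)) \<bullet> d k"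
      by (rule step(3))
    show "(norm (G (x k)))\<^sup>2 \<le> M * - (G (x k) \<bullet> d k)"
      unfolding d_B using norm_sq_le_inner_inv_sym_psd_op[OF B_psd B_bij _ M(2)] M(1) by simp
    show "norm (d k) \<le> M * norm (G (x k))" unfolding d_B using M(3) by simp
  qed (use grad grad_cont iter ls_params M(1) in auto)
  then show ?thesis
    using cluster N(3) sconv gradient_related_descent.tendsto_cluster_if_strongly_convex by blast
qed

end
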